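(* Let $\Sigma$ be a set of prime numbers, $S$ the multiplicative submonoid of $\mathbb{N}$ generated by $\Sigma$, and $\mathbb{Z}[S^{-1}]\subset\mathbb{Q}$ the corresponding localization. Let $M$ be a locally compact topological $\mathbb{Z}[S^{-1}]$-module. Then $M$ is compactly generated if and only if its Pontryagin dual $\widehat{M}$ has the no small submodules property.
   Context: All topological modules are Hausdorff; $\mathbb{Z}[S^{-1}]$ is discrete; a locally compact topological $\mathbb{Z}[S^{-1}]$-module is a locally compact abelian group with a $\mathbb{Z}[S^{-1}]$-module structure with continuous scalar multiplication. $M$ is compactly generated if it is the submodule generated by some compact subset. $\widehat{M}$ is the group of continuous homomorphisms $M\to\mathbb{S}^1$ with the compact-open topology, a topological $\mathbb{Z}[S^{-1}]$-module via $\chi^r(m)=\chi(rm)$. A topological module has the no small submodules property if some neighbourhood of $0$ contains no nonzero submodule. *)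

theory Defs
  imports "HOL-Analysis.Analysis"
begin

inductive_set gen_monoid :: "nat set \<Rightarrow> nat set" for \<Sigma> :: "nat set" where
  one: "1 \<in> gen_monoid \<Sigma>"
| mult: "p \<in> \<Sigma> \<Longrightarrow> n \<in> gen_monoid \<Sigma> \<Longrightarrow> p * n \<in> gen_monoid \<Sigma>"

definition ZS :: "nat set \<Rightarrow> rat set" where
  "ZS \<Sigma> = {of_int a / of_nat s | a s. s \<in> gen_monoid \<Sigma>}"

text \<open>A Z[S^-1]-module structure on an abelian group, given by a scalar multiplication
  defined on (at least) the elements of Z[S^-1].\<close>
definition is_ZS_module :: "nat set \<Rightarrow> (rat \<Rightarrow> 'm::ab_group_add \<Rightarrow> 'm) \<Rightarrow> bool" where
  "is_ZS_module \<Sigma> smul \<longleftrightarrow>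
     (\<forall>r\<in>ZS \<Sigma>. \<forall>x y. smul r (x + y) = smul r x + smul r y) \<and>
     (\<forall>r\<in>ZS \<Sigma>. \<forall>s\<in>ZS \<Sigma>. \<forall>x. smul (r + s) x = smul r x + smul s x) \<and>
     (\<forall>r\<in>ZS \<Sigma>. \<forall>s\<in>ZS \<Sigma>. \<forall>x. smul (r * s) x = smul r (smul s x)) \<and>
     (\<forall>x. smul 1 x = x)"

text \<open>Topological module over the discrete ring Z[S^-1]: scalar multiplication by each
  ring element is continuous.\<close>
definition is_top_ZS_module :: "nat set \<Rightarrow> (rat \<Rightarrow> 'm::topological_ab_group_add \<Rightarrow> 'm) \<Rightarrow> bool" where
  "is_top_ZS_module \<Sigma> smul \<longleftrightarrow>
     is_ZS_module \<Sigma> smul \<and> (\<forall>r\<in>ZS \<Sigma>. continuous_on UNIV (smul r))"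

definition is_submodule :: "nat set \<Rightarrow> (rat \<Rightarrow> 'm::ab_group_add \<Rightarrow> 'm) \<Rightarrow> 'm set \<Rightarrow> bool" where
  "is_submodule \<Sigma> smul N \<longleftrightarrow>
     0 \<in> N \<and> (\<forall>x\<in>N. \<forall>y\<in>N. x + y \<in> N) \<and> (\<forall>r\<in>ZS \<Sigma>. \<forall>x\<in>N. smul r x \<in> N)"

definition generated_submodule :: "nat set \<Rightarrow> (rat \<Rightarrow> 'm::ab_group_add \<Rightarrow> 'm) \<Rightarrow> 'm set \<Rightarrow> 'm set" where
  "generated_submodule \<Sigma> smul K = \<Inter>{N. is_submodule \<Sigma> smul N \<and> K \<subseteq> N}"

definition compactly_generated :: "nat set \<Rightarrow> (rat \<Rightarrow> 'm::topological_ab_group_add \<Rightarrow> 'm) \<Rightarrow> bool" where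
  "compactly_generated \<Sigma> smul \<longleftrightarrow>
     (\<exists>K. compact K \<and> generated_submodule \<Sigma> smul K = UNIV)"

definition characters :: "('m::topological_ab_group_add \<Rightarrow> complex) set" where
  "characters = {c. continuous_on UNIV c \<and> (\<forall>x. cmod (c x) = 1) \<and>
                     (\<forall>x y. c (x + y) = c x * c y)}"

definition dual_topology :: "('m::topological_ab_group_add \<Rightarrow> complex) topology" where
  "dual_topology = subtopology
     (topology_generated_by {{c. c ` K \<subseteq> U} | K U. compact K \<and> open U}) characters"

text \<open>Submodules of the dual module, with action chi^r(m) = chi(r m); the zero is the
  trivial character and addition is pointwise multiplication.\<close>
definition is_dual_submodule :: "nat set \<Rightarrow> (rat \<Rightarrow> 'm::topological_ab_group_add \<Rightarrow> 'm)
    \<Rightarrow> ('m \<Rightarrow> complex) set \<Rightarrow> bool" where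
  "is_dual_submodule \<Sigma> smul H \<longleftrightarrow>
     H \<subseteq> characters \<and> (\<lambda>_. 1) \<in> H \<and>
     (\<forall>c\<in>H. \<forall>d\<in>H. (\<lambda>x. c x * d x) \<in> H) \<and>
     (\<forall>r\<in>ZS \<Sigma>. \<forall>c\<in>H. (\<lambda>x. c (smul r x)) \<in> H)"

definition dual_no_small_submodules :: "nat set \<Rightarrow> (rat \<Rightarrow> 'm::topological_ab_group_add \<Rightarrow> 'm) \<Rightarrow> bool" where
  "dual_no_small_submodules \<Sigma> smul \<longleftrightarrow>
     (\<exists>V. openin dual_topology V \<and> (\<lambda>_. 1) \<in> V \<and>
        (\<forall>H. is_dual_submodule \<Sigma> smul H \<and> H \<subseteq> V \<longrightarrow> H = {\<lambda>_. 1}))"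

end

theory Submission imports Defs begin

text \<open>If a compact set \<open>K\<close> generates \<open>M\<close>, take the neighbourhood of the trivial character
  consisting of the characters mapping \<open>K\<close> into the right half plane. A submodule of the dual
  inside it is stable under multiplication by integers, so for each of its characters all powers
  of a value on \<open>K\<close> lie in the right half plane; such a point of the circle is \<open>1\<close>. Hence the
  submodule annihilates the submodule generated by \<open>K\<close>, which is \<open>M\<close>.

  Conversely, a neighbourhood of the trivial character without nontrivial submodules contains
  all characters trivial on some compact \<open>K\<close>. Let \<open>N\<close> be generated by \<open>K\<close> and a compact
  neighbourhood of \<open>0\<close>. The characters trivial on \<open>N\<close> form a submodule of the dual inside the
  neighbourhood, so they are trivial. As \<open>N\<close> is open, every circle-valued homomorphism trivial
  on \<open>N\<close> is continuous, and since the circle is divisible such homomorphisms separate the points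
  outside \<open>N\<close> from \<open>N\<close> (extension by Zorn's lemma). Therefore \<open>N = M\<close>.\<close>

lemma of_int_in_ZS: "of_int a \<in> ZS \<Sigma>"
  unfolding ZS_def using gen_monoid.one[of \<Sigma>] by (intro CollectI exI[of _ a] exI[of _ 1]) auto

lemma int_ideal_principal:
  fixes I :: "int set"
  assumes I0: "0 \<in> I" and I_add: "\<And>a b. a \<in> I \<Longrightarrow> b \<in> I \<Longrightarrow> a + b \<in> I"
    and I_mult: "\<And>a m. a \<in> I \<Longrightarrow> m * a \<in> I"
  shows "I = {0} \<or> (\<exists>k>0. k \<in> I \<and> (\<forall>n\<in>I. k dvd n))"
proof (cases "I = {0}")
  case False
  then obtain n where n: "n \<in> I" "n \<noteq> 0" using I0 by blast
  obtain m where m: "m > 0" "m \<in> I"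
  proof (cases "n > 0")
    case False
    with n show thesis using that[of "- n"] I_mult[of n "-1"] by simp
  qed (use n in blast)
  then have "\<exists>m::nat. m > 0 \<and> int m \<in> I" by (intro exI[of _ "nat m"]) simp
  then have least: "(LEAST m. m > 0 \<and> int m \<in> I) > 0 \<and> int (LEAST m. m > 0 \<and> int m \<in> I) \<in> I"
    by (rule LeastI_ex)
  define k where "k = int (LEAST m. m > 0 \<and> int m \<in> I)"
  have k: "k > 0" "k \<in> I" using least unfolding k_def by auto
  have "k dvd n" if n: "n \<in> I" for n
  proof (rule ccontr)
    assume "\<not> k dvd n"
    then have pos: "n mod k > 0"
      using pos_mod_sign[OF k(1), of n] by (simp add: dvd_eq_mod_eq_0 order_less_le)
    have "n mod k \<in> I"
      using I_add[OF n I_mult[OF k(2), of "- (n div k)"]] by (simp add: minus_div_mult_eq_mod)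
    then have "int (nat (n mod k)) \<in> I" using pos by simp
    then have "(LEAST m. m > 0 \<and> int m \<in> I) \<le> nat (n mod k)" using pos by (intro Least_le) simp
    then show False using pos_mod_bound[OF k(1), of n] pos unfolding k_def by linarith
  qed
  then show ?thesis using k by blast
qed simp

lemma unit_circle_nth_root:
  fixes w :: complex
  assumes "cmod w = 1" "0 < k"
  shows "\<exists>z. cmod z = 1 \<and> z ^ k = w"
proof -
  define z where "z = exp (Ln w / of_nat k)"
  have "z ^ k = exp (of_nat k * (Ln w / of_nat k))" unfolding z_def by (rule exp_of_nat_mult[symmetric])
  also have "\<dots> = w" using assms by (auto intro: exp_Ln)
  finally have z: "z ^ k = w" .
  then have "cmod z ^ k = 1 ^ k" using assms(1) by (simp add: norm_power[symmetric])
  then have "cmod z = 1" by (rule power_eq_imp_eq_base) (use assms(2) in auto)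
  with z show ?thesis by blast
qed

lemma nontrivial_root_of_unity:
  assumes "1 < k"
  shows "\<exists>z::complex. cmod z = 1 \<and> z ^ k = 1 \<and> z \<noteq> 1"
proof -
  have "\<not> {z::complex. z ^ k = 1} \<subseteq> {1}"
  proof
    assume "{z::complex. z ^ k = 1} \<subseteq> {1}"
    then have "card {z::complex. z ^ k = 1} \<le> card {1::complex}" by (rule card_mono[rotated]) simp
    with card_roots_unity_eq[of k] assms show False by simp
  qed
  then obtain z :: complex where z: "z ^ k = 1" "z \<noteq> 1" by blast
  then have "cmod z ^ k = 1 ^ k" by (simp add: norm_power[symmetric])
  then have "cmod z = 1" by (rule power_eq_imp_eq_base) (use assms in auto)
  with z show ?thesis by blast
qed

text \<open>Divisibility of the circle: \<open>z\<close> is a \<open>k\<close>-th root of the value at the generator \<open>k\<close> of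
  the ideal \<open>I\<close>.\<close>
lemma circle_hom_on_int_ideal_is_power:
  fixes \<phi> :: "int \<Rightarrow> complex"
  assumes I0: "0 \<in> I" and I_add: "\<And>a b. a \<in> I \<Longrightarrow> b \<in> I \<Longrightarrow> a + b \<in> I"
    and I_mult: "\<And>a m. a \<in> I \<Longrightarrow> m * a \<in> I"
    and norm_\<phi>: "\<And>n. n \<in> I \<Longrightarrow> cmod (\<phi> n) = 1"
    and \<phi>_mult: "\<And>k q. k \<in> I \<Longrightarrow> \<phi> (q * k) = \<phi> k powi q"
  shows "\<exists>z. cmod z = 1 \<and> (\<forall>n\<in>I. z powi n = \<phi> n) \<and> (1 \<notin> I \<and> (\<forall>n\<in>I. \<phi> n = 1) \<longrightarrow> z \<noteq> 1)"
  using int_ideal_principal[OF I0 I_add I_mult]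
proof
  assume "I = {0}"
  moreover have "\<phi> 0 = 1" using \<phi>_mult[OF I0, of 0] by simp
  ultimately show ?thesis by (intro exI[of _ "-1"]) auto
next
  assume "\<exists>k>0. k \<in> I \<and> (\<forall>n\<in>I. k dvd n)"
  then obtain k where k: "k > 0" "k \<in> I" "\<And>n. n \<in> I \<Longrightarrow> k dvd n" by blast
  obtain z where z: "cmod z = 1" "z ^ nat k = \<phi> k" "k \<noteq> 1 \<and> \<phi> k = 1 \<longrightarrow> z \<noteq> 1"
  proof (cases "k \<noteq> 1 \<and> \<phi> k = 1")
    case True
    with k(1) nontrivial_root_of_unity[of "nat k"] show ?thesis using that by fastforce
  next
    case False
    with unit_circle_nth_root[OF norm_\<phi>[OF k(2)], of "nat k"] k(1) show ?thesis using that by auto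
  qed
  have "z powi n = \<phi> n" if n: "n \<in> I" for n
  proof -
    obtain q where "n = k * q" using k(3)[OF n] by (elim dvdE)
    then have q: "n = q * k" by simp
    have "z powi n = (z powi k) powi q" by (simp add: q power_int_mult mult.commute)
    also have "\<dots> = \<phi> n" using z(2) k(1) \<phi>_mult[OF k(2), of q] by (simp add: q power_int_def)
    finally show ?thesis .
  qed
  moreover have "1 \<notin> I \<Longrightarrow> k \<noteq> 1" using k(2) by auto
  ultimately show ?thesis using z k(2) by blast
qed

locale int_module =
  fixes imul :: "int \<Rightarrow> 'a::ab_group_add \<Rightarrow> 'a"
  assumes imul_add_left: "imul (m + n) x = imul m x + imul n x"
    and imul_add_right: "imul n (x + y) = imul n x + imul n y"
    and imul_mult: "imul (m * n) x = imul m (imul n x)"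
    and imul_one: "imul 1 x = x"
begin

lemma imul_zero: "imul 0 x = 0"
  using imul_add_left[of 0 0 x] by simp

lemma imul_uminus: "imul (- 1) x = - x"
  using imul_add_left[of "- 1" 1 x] by (simp add: imul_zero imul_one eq_neg_iff_add_eq_0)

lemma hom_imul_eq_powi:
  fixes f :: "'a \<Rightarrow> 'b::field"
  assumes D: "\<And>n. imul n x \<in> D"
    and hom: "\<And>a b. a \<in> D \<Longrightarrow> b \<in> D \<Longrightarrow> f (a + b) = f a * f b"
    and nonzero: "\<And>a. a \<in> D \<Longrightarrow> f a \<noteq> 0"
  shows "f (imul n x) = f x powi n"
proof -
  have x: "x \<in> D" using D[of 1] by (simp add: imul_one)
  have "f (imul 0 x) = f (imul 0 x) * f (imul 0 x)"
    using hom[OF D D, of 0 0] by (simp add: imul_zero)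
  then have f0: "f (imul 0 x) = 1" using nonzero[OF D] by simp
  have step: "f (imul (i + 1) x) = f (imul i x) * f x" for i
    using hom[OF D x, of i] by (simp add: imul_add_left imul_one)
  show ?thesis
  proof (induction n rule: int_induct[where k = 0])
    case base
    show ?case using f0 by simp
  next
    case (step1 i)
    then show ?case using step[of i] nonzero[OF x] by (simp add: power_int_add_1)
  next
    case (step2 i)
    then show ?case using step[of "i - 1"] nonzero[OF x] by (simp add: power_int_diff field_simps)
  qed
qed

text \<open>Partial characters are encoded by their graphs, so that extension is inclusion and
  chains have their union as upper bound.\<close>
definition partial_character :: "('a \<times> complex) set \<Rightarrow> bool" where
  "partial_character G \<longleftrightarrow> single_valued G \<and> 0 \<in> Domain G \<and>
     (\<forall>x u y v. (x, u) \<in> G \<longrightarrow> (y, v) \<in> G \<longrightarrow> (x + y, u * v) \<in> G) \<and>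
     (\<forall>x\<in>Domain G. \<forall>n. imul n x \<in> Domain G) \<and> (\<forall>x u. (x, u) \<in> G \<longrightarrow> cmod u = 1)"

definition graph_value :: "('a \<times> complex) set \<Rightarrow> 'a \<Rightarrow> complex" where
  "graph_value G x = (THE u. (x, u) \<in> G)"

context
  fixes G assumes G: "partial_character G"
begin

lemma graph_value_eq: "(x, u) \<in> G \<Longrightarrow> graph_value G x = u"
  using G unfolding partial_character_def graph_value_def by (auto dest: single_valuedD)

lemma graph_value_in_graph: "x \<in> Domain G \<Longrightarrow> (x, graph_value G x) \<in> G"
  using graph_value_eq by blast

lemma zero_in_Domain: "0 \<in> Domain G"
  using G unfolding partial_character_def by blast

lemma graph_add: "(x, u) \<in> G \<Longrightarrow> (y, v) \<in> G \<Longrightarrow> (x + y, u * v) \<in> G"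
  using G unfolding partial_character_def by blast

lemma graph_norm: "(x, u) \<in> G \<Longrightarrow> cmod u = 1"
  using G unfolding partial_character_def by blast

lemma imul_in_Domain: "x \<in> Domain G \<Longrightarrow> imul n x \<in> Domain G"
  using G unfolding partial_character_def by blast

lemma add_in_Domain: "x \<in> Domain G \<Longrightarrow> y \<in> Domain G \<Longrightarrow> x + y \<in> Domain G"
  by (meson Domain.DomainI graph_add graph_value_in_graph)

lemma graph_value_add:
  "x \<in> Domain G \<Longrightarrow> y \<in> Domain G \<Longrightarrow> graph_value G (x + y) = graph_value G x * graph_value G y"
  by (intro graph_value_eq graph_add graph_value_in_graph)

lemma uminus_in_Domain: "x \<in> Domain G \<Longrightarrow> - x \<in> Domain G"
  using imul_in_Domain[of x "- 1"] by (simp add: imul_uminus)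

lemma norm_graph_value: "x \<in> Domain G \<Longrightarrow> cmod (graph_value G x) = 1"
  by (rule graph_norm[OF graph_value_in_graph])

lemma graph_value_imul: "x \<in> Domain G \<Longrightarrow> graph_value G (imul n x) = graph_value G x powi n"
proof (rule hom_imul_eq_powi[where D = "Domain G"])
  show "graph_value G a \<noteq> 0" if "a \<in> Domain G" for a
    using norm_graph_value[OF that] by auto
qed (simp_all add: imul_in_Domain graph_value_add)

lemma graph_value_zero: "graph_value G 0 = 1"
  using graph_value_imul[OF zero_in_Domain, of 0] by (simp add: imul_zero)

lemma extension_value_well_defined:
  assumes z: "z \<noteq> 0"
    and compatible: "\<And>n. imul n y \<in> Domain G \<Longrightarrow> z powi n = graph_value G (imul n y)"
    and a: "a \<in> Domain G" and a': "a' \<in> Domain G" and eq: "a + imul n y = a' + imul n' y"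
  shows "graph_value G a * z powi n = graph_value G a' * z powi n'"
proof -
  have "imul (n' - n) y = imul n' y + imul (- 1) (imul n y)"
    by (simp flip: imul_mult imul_add_left)
  also have "\<dots> = a - a'" using eq by (simp add: imul_uminus algebra_simps)
  finally have diff: "imul (n' - n) y = a - a'" .
  have aa': "a - a' \<in> Domain G" using add_in_Domain[OF a uminus_in_Domain[OF a']] by simp
  have "graph_value G a = graph_value G a' * graph_value G (a - a')"
    using graph_value_add[OF a' aa'] by simp
  also have "graph_value G (a - a') = z powi (n' - n)"
    using compatible[of "n' - n"] diff aa' by simp
  finally have "graph_value G a * z powi n = graph_value G a' * (z powi (n' - n) * z powi n)"
    by simp
  also have "z powi (n' - n) * z powi n = z powi n'"
    using z by (simp flip: power_int_add)
  finally show ?thesis .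
qed

lemma partial_character_extension:
  assumes z: "cmod z = 1"
    and compatible: "\<And>n. imul n y \<in> Domain G \<Longrightarrow> z powi n = graph_value G (imul n y)"
  defines "G' \<equiv> {(a + imul n y, graph_value G a * z powi n) | a n. a \<in> Domain G}"
  shows "partial_character G' \<and> G \<subseteq> G' \<and> (y, z) \<in> G'"
proof (intro conjI)
  have z0: "z \<noteq> 0" using z by auto
  show "partial_character G'"
    unfolding partial_character_def single_valued_def
  proof (intro conjI allI impI ballI)
    fix x u v assume "(x, u) \<in> G'" "(x, v) \<in> G'"
    then obtain a n a' n' where "a \<in> Domain G" "x = a + imul n y" "u = graph_value G a * z powi n"
      "a' \<in> Domain G" "x = a' + imul n' y" "v = graph_value G a' * z powi n'"
      unfolding G'_def by blast
    then show "u = v" using extension_value_well_defined[OF z0 compatible] by metis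
  next
    have "(0 + imul 0 y, graph_value G 0 * z powi 0) \<in> G'"
      unfolding G'_def using zero_in_Domain by blast
    then show "0 \<in> Domain G'" by (auto simp: imul_zero)
  next
    fix x u x' u' assume "(x, u) \<in> G'" "(x', u') \<in> G'"
    then obtain a n a' n' where a: "a \<in> Domain G" "x = a + imul n y" "u = graph_value G a * z powi n"
      and a': "a' \<in> Domain G" "x' = a' + imul n' y" "u' = graph_value G a' * z powi n'"
      unfolding G'_def by blast
    have "x + x' = (a + a') + imul (n + n') y" using a a' by (simp add: imul_add_left algebra_simps)
    moreover have "u * u' = graph_value G (a + a') * z powi (n + n')"
      using a a' z0 by (simp add: graph_value_add power_int_add)
    ultimately show "(x + x', u * u') \<in> G'"
      unfolding G'_def using add_in_Domain[OF a(1) a'(1)] by blast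
  next
    fix x k assume "x \<in> Domain G'"
    then obtain a n where a: "a \<in> Domain G" "x = a + imul n y" unfolding G'_def by blast
    then have "imul k x = imul k a + imul (k * n) y" by (simp add: imul_add_right imul_mult)
    then have "(imul k x, graph_value G (imul k a) * z powi (k * n)) \<in> G'"
      unfolding G'_def using imul_in_Domain[OF a(1)] by blast
    then show "imul k x \<in> Domain G'" by blast
  next
    fix x u assume "(x, u) \<in> G'"
    then obtain a n where "a \<in> Domain G" "u = graph_value G a * z powi n" unfolding G'_def by blast
    then show "cmod u = 1" using norm_graph_value z by (simp add: norm_mult norm_power_int)
  qed
  show "G \<subseteq> G'"
  proof
    fix p assume p: "p \<in> G"
    obtain x u where xu: "p = (x, u)" "x \<in> Domain G" using p by (cases p) blast
    have "(x + imul 0 y, graph_value G x * z powi 0) \<in> G'" unfolding G'_def using xu(2) by blast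
    then show "p \<in> G'" using graph_value_eq p xu(1) by (simp add: imul_zero)
  qed
  have "(0 + imul 1 y, graph_value G 0 * z powi 1) \<in> G'"
    unfolding G'_def using zero_in_Domain by blast
  then show "(y, z) \<in> G'" by (simp add: imul_one graph_value_zero)
qed

lemma compatible_value_exists:
  "\<exists>z. cmod z = 1 \<and> (\<forall>n. imul n y \<in> Domain G \<longrightarrow> z powi n = graph_value G (imul n y)) \<and>
     (y \<notin> Domain G \<and> (\<forall>x\<in>Domain G. graph_value G x = 1) \<longrightarrow> z \<noteq> 1)"
proof -
  let ?I = "{n. imul n y \<in> Domain G}"
  have "\<exists>z. cmod z = 1 \<and> (\<forall>n\<in>?I. z powi n = graph_value G (imul n y)) \<and>
          (1 \<notin> ?I \<and> (\<forall>n\<in>?I. graph_value G (imul n y) = 1) \<longrightarrow> z \<noteq> 1)"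
  proof (rule circle_hom_on_int_ideal_is_power)
    show "0 \<in> ?I" using zero_in_Domain by (simp add: imul_zero)
    show "a + b \<in> ?I" if "a \<in> ?I" "b \<in> ?I" for a b
      using that add_in_Domain by (simp add: imul_add_left)
    show "m * a \<in> ?I" if "a \<in> ?I" for a m
      using that imul_in_Domain by (simp add: imul_mult)
    show "cmod (graph_value G (imul n y)) = 1" if "n \<in> ?I" for n
      using that norm_graph_value by simp
    show "graph_value G (imul (q * k) y) = graph_value G (imul k y) powi q" if "k \<in> ?I" for k q
      using that graph_value_imul by (simp add: imul_mult)
  qed
  then obtain z where z: "cmod z = 1" "\<forall>n\<in>?I. z powi n = graph_value G (imul n y)"
    "1 \<notin> ?I \<and> (\<forall>n\<in>?I. graph_value G (imul n y) = 1) \<longrightarrow> z \<noteq> 1"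
    by blast
  have "y \<notin> Domain G \<and> (\<forall>x\<in>Domain G. graph_value G x = 1) \<longrightarrow> z \<noteq> 1"
    using z(3) by (simp add: imul_one)
  with z(1,2) show ?thesis by blast
qed

end

lemma partial_character_extend:
  assumes G: "partial_character G"
  shows "\<exists>G'. partial_character G' \<and> G \<subseteq> G' \<and> y \<in> Domain G' \<and>
     (y \<notin> Domain G \<and> (\<forall>x\<in>Domain G. graph_value G x = 1) \<longrightarrow> graph_value G' y \<noteq> 1)"
proof -
  obtain z where z: "cmod z = 1" "\<forall>n. imul n y \<in> Domain G \<longrightarrow> z powi n = graph_value G (imul n y)"
    "y \<notin> Domain G \<and> (\<forall>x\<in>Domain G. graph_value G x = 1) \<longrightarrow> z \<noteq> 1"
    using compatible_value_exists[OF G, of y] by (elim exE conjE)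
  obtain G' where G': "partial_character G'" "G \<subseteq> G'" "(y, z) \<in> G'"
    using partial_character_extension[OF G z(1)] z(2) by blast
  have "graph_value G' y = z" using graph_value_eq[OF G'(1,3)] .
  with G' z(3) show ?thesis by blast
qed

lemma partial_character_chain_Union:
  assumes nonempty: "C \<noteq> {}" and partial: "\<And>G. G \<in> C \<Longrightarrow> partial_character G"
    and chain: "\<forall>G\<in>C. \<forall>H\<in>C. G \<subseteq> H \<or> H \<subseteq> G"
  shows "partial_character (\<Union>C)"
proof -
  have common: "\<exists>G\<in>C. p \<in> G \<and> q \<in> G" if "p \<in> \<Union>C" "q \<in> \<Union>C" for p q
    using that chain by blast
  show ?thesis
    unfolding partial_character_def single_valued_def
  proof (intro conjI allI impI ballI)
    fix x u v assume "(x, u) \<in> \<Union>C" "(x, v) \<in> \<Union>C"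
    then obtain G where "G \<in> C" "(x, u) \<in> G" "(x, v) \<in> G" using common by blast
    then show "u = v" using graph_value_eq partial by metis
  next
    obtain G where "G \<in> C" using nonempty by blast
    then show "0 \<in> Domain (\<Union>C)" using zero_in_Domain[OF partial] by blast
  next
    fix x u y v assume "(x, u) \<in> \<Union>C" "(y, v) \<in> \<Union>C"
    then obtain G where "G \<in> C" "(x, u) \<in> G" "(y, v) \<in> G" using common by blast
    then show "(x + y, u * v) \<in> \<Union>C" using graph_add[OF partial] by blast
  next
    fix x n assume "x \<in> Domain (\<Union>C)"
    then obtain G where "G \<in> C" "x \<in> Domain G" by blast
    then show "imul n x \<in> Domain (\<Union>C)" using imul_in_Domain[OF partial] by blast
  next
    fix x u assume "(x, u) \<in> \<Union>C"
    then show "cmod u = 1" using graph_norm[OF partial] by blast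
  qed
qed

lemma partial_character_extends_to_character:
  assumes G: "partial_character G"
  shows "\<exists>G'. partial_character G' \<and> G \<subseteq> G' \<and> Domain G' = UNIV"
proof -
  let ?A = "{G'. partial_character G' \<and> G \<subseteq> G'}"
  have "\<exists>M\<in>?A. \<forall>X\<in>?A. M \<subseteq> X \<longrightarrow> X = M"
  proof (rule subset_Zorn_nonempty)
    show "?A \<noteq> {}" using G by blast
    show "\<Union>C \<in> ?A" if C: "C \<noteq> {}" "subset.chain ?A C" for C
    proof -
      have CA: "C \<subseteq> ?A" using C(2) unfolding subset_chain_def by (rule conjunct1)
      have "partial_character (\<Union>C)"
      proof (rule partial_character_chain_Union[OF C(1)])
        show "partial_character H" if "H \<in> C" for H using that CA by blast
        show "\<forall>G\<in>C. \<forall>H\<in>C. G \<subseteq> H \<or> H \<subseteq> G"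
          using C(2) unfolding subset_chain_def by (rule conjunct2)
      qed
      moreover have "G \<subseteq> \<Union>C" using C(1) CA by blast
      ultimately show ?thesis by blast
    qed
  qed
  then obtain M where "M \<in> ?A" and maximal: "\<forall>X\<in>?A. M \<subseteq> X \<longrightarrow> X = M" ..
  then have M: "partial_character M" "G \<subseteq> M" by simp_all
  have "y \<in> Domain M" for y
  proof -
    obtain M' where M': "partial_character M'" "M \<subseteq> M'" "y \<in> Domain M'"
      using partial_character_extend[OF M(1), of y] by blast
    then have "M' = M" using maximal M(2) by blast
    with M'(3) show ?thesis by simp
  qed
  with M show ?thesis by blast
qed

theorem character_separates_subgroup:
  assumes N: "0 \<in> N" "\<And>a b. a \<in> N \<Longrightarrow> b \<in> N \<Longrightarrow> a + b \<in> N" "\<And>a n. a \<in> N \<Longrightarrow> imul n a \<in> N"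
    and x0: "x0 \<notin> N"
  shows "\<exists>\<psi>. (\<forall>x y. \<psi> (x + y) = \<psi> x * \<psi> y) \<and> (\<forall>x. cmod (\<psi> x) = 1) \<and>
             (\<forall>a\<in>N. \<psi> a = 1) \<and> \<psi> x0 \<noteq> 1"
proof -
  define G0 where "G0 = (\<lambda>a. (a, 1::complex)) ` N"
  have Domain_G0: "Domain G0 = N" unfolding G0_def by force
  have G0: "partial_character G0"
    unfolding partial_character_def single_valued_def Domain_G0 by (unfold G0_def) (use N in auto)
  have G0_pairs: "(a, 1) \<in> G0" if "a \<in> N" for a unfolding G0_def using that by blast
  then have trivial: "\<forall>x\<in>Domain G0. graph_value G0 x = 1"
    unfolding Domain_G0 using graph_value_eq[OF G0] by blast
  obtain G1 where G1: "partial_character G1" "G0 \<subseteq> G1" "x0 \<in> Domain G1" "graph_value G1 x0 \<noteq> 1"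
    using partial_character_extend[OF G0, of x0] x0 trivial unfolding Domain_G0 by blast
  obtain G where G: "partial_character G" "G1 \<subseteq> G" "Domain G = UNIV"
    using partial_character_extends_to_character[OF G1(1)] by blast
  have "graph_value G x0 = graph_value G1 x0"
    using graph_value_in_graph[OF G1(1,3)] G(2) by (intro graph_value_eq[OF G(1)]) blast
  moreover have "graph_value G a = 1" if "a \<in> N" for a
    using G0_pairs[OF that] G1(2) G(2) by (intro graph_value_eq[OF G(1)]) blast
  ultimately show ?thesis
    using graph_value_add[OF G(1)] norm_graph_value[OF G(1)] G(3) G1(4)
    by (intro exI[of _ "graph_value G"]) simp
qed

end

lemma unit_circle_eq_1_if_Re_powers_pos:
  fixes w :: complex
  assumes w: "cmod w = 1" and pos: "\<And>n. Re (w ^ n) > 0"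
  shows "w = 1"
proof (rule ccontr)
  assume "w \<noteq> 1"
  define t where "t = Arg w"
  have "w \<noteq> 0" using w by auto
  then have wt: "w = cis t" using cis_Arg[of w] w by (simp add: t_def sgn_div_norm)
  with \<open>w \<noteq> 1\<close> have t0: "t \<noteq> 0" by auto
  have "- pi < t" "t \<le> pi" unfolding t_def using Arg_bounded by auto
  define a where "a = \<bar>t\<bar>"
  have a: "0 < a" "a \<le> pi" using t0 \<open>- pi < t\<close> \<open>t \<le> pi\<close> unfolding a_def by auto
  \<comment> \<open>the first multiple of the angle that reaches \<open>\<pi>/2\<close> lands in \<open>[\<pi>/2, \<pi>/2 + a)\<close>, where the cosine is \<open>\<le> 0\<close>\<close>
  define n where "n = nat \<lceil>pi / (2 * a)\<rceil>"
  have "real n \<ge> pi / (2 * a)" "real n < pi / (2 * a) + 1"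
    unfolding n_def using a(1) by (simp_all add: of_nat_nat ceiling_correct) linarith
  then have "pi / 2 \<le> real n * a" "real n * a < pi / 2 + a"
    using a(1) by (simp_all add: field_simps)
  then have "0 \<le> cos (real n * a - pi)" using a by (intro cos_ge_zero) auto
  then have "cos (real n * t) \<le> 0" unfolding a_def by (cases "t \<ge> 0") (auto simp: cos_diff)
  moreover have "Re (w ^ n) = cos (real n * t)" using Complex.DeMoivre[of t n] wt by simp
  ultimately show False using pos[of n] by simp
qed

lemma character_zero:
  assumes "c \<in> characters"
  shows "c 0 = 1"
proof -
  have "c (0 + 0) = c 0 * c 0" "cmod (c 0) = 1"
    using assms unfolding characters_def by blast+
  then show ?thesis by (auto simp: mult_cancel_left1)
qed

lemma characters_one: "(\<lambda>_. 1) \<in> characters"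
  unfolding characters_def by simp

lemma characters_mult:
  assumes "c \<in> characters" "d \<in> characters"
  shows "(\<lambda>x. c x * d x) \<in> characters"
proof -
  have c: "continuous_on UNIV c" "\<forall>x. cmod (c x) = 1" "\<forall>x y. c (x + y) = c x * c y"
    using assms(1) unfolding characters_def by blast+
  have d: "continuous_on UNIV d" "\<forall>x. cmod (d x) = 1" "\<forall>x y. d (x + y) = d x * d y"
    using assms(2) unfolding characters_def by blast+
  show ?thesis
    unfolding characters_def using c d by (simp add: continuous_on_mult norm_mult algebra_simps)
qed

lemma characters_comp_additive:
  assumes c: "c \<in> characters" and g: "continuous_on UNIV g" "\<And>x y. g (x + y) = g x + g y"
  shows "(\<lambda>x. c (g x)) \<in> characters"
proof -
  have "continuous_on UNIV (\<lambda>x. c (g x))"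
    using c g(1) unfolding characters_def by (auto intro: continuous_on_compose2)
  with c g(2) show ?thesis unfolding characters_def by simp
qed

lemma continuous_on_if_trivial_near_zero:
  fixes f :: "'a::topological_ab_group_add \<Rightarrow> 'b::{monoid_mult, topological_space}"
  assumes hom: "\<And>x y. f (x + y) = f x * f y"
    and U: "open U" "0 \<in> U" "\<And>x. x \<in> U \<Longrightarrow> f x = 1"
  shows "continuous_on UNIV f"
  unfolding continuous_on_topological
proof (intro ballI allI impI)
  fix x B assume "f x \<in> B"
  let ?A = "(\<lambda>y. y - x) -` U"
  have "open ?A" using U(1) by (intro open_vimage continuous_intros)
  moreover have "x \<in> ?A" using U(2) by simp
  moreover have "f y \<in> B" if "y \<in> ?A" for y
    using hom[of x "y - x"] U(3) that \<open>f x \<in> B\<close> by simp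
  ultimately show "\<exists>A. open A \<and> x \<in> A \<and> (\<forall>y\<in>UNIV. y \<in> A \<longrightarrow> f y \<in> B)" by blast
qed

lemma openin_dual_topology_compact_open:
  assumes "compact K" "open U"
  shows "openin dual_topology ({c. c ` K \<subseteq> U} \<inter> characters)"
  unfolding dual_topology_def openin_subtopology openin_topology_generated_by_iff
proof (intro exI conjI)
  show "generate_topology_on {{c. c ` K \<subseteq> U} | K U. compact K \<and> open U} {c. c ` K \<subseteq> U}"
    using assms by (intro generate_topology_on.Basis) blast
qed (rule refl)

lemma compact_open_nhd_of_1_contains_annihilator:
  assumes "generate_topology_on {{c. c ` K \<subseteq> U} | K U. compact (K :: 'a::topological_space set) \<and> open (U :: complex set)} T"
    and "(\<lambda>_. 1) \<in> T"
  shows "\<exists>K. compact K \<and> (\<forall>d. (\<forall>x\<in>K. d x = 1) \<longrightarrow> d \<in> T)"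
  using assms
proof (induction rule: generate_topology_on.induct)
  case (Int a b)
  then obtain K1 K2 where "compact K1" "\<forall>d. (\<forall>x\<in>K1. d x = 1) \<longrightarrow> d \<in> a"
    "compact K2" "\<forall>d. (\<forall>x\<in>K2. d x = 1) \<longrightarrow> d \<in> b" by auto
  then show ?case by (intro exI[of _ "K1 \<union> K2"]) auto
next
  case (UN \<U>)
  then obtain W where W: "W \<in> \<U>" "(\<lambda>_. 1) \<in> W" by blast
  then obtain K where "compact K" "\<forall>d. (\<forall>x\<in>K. d x = 1) \<longrightarrow> d \<in> W" using UN.IH by blast
  with W(1) show ?case by blast
next
  case (Basis W)
  then obtain K U where "W = {c. c ` K \<subseteq> U}" "compact K" by blast
  with Basis.prems show ?case by (intro exI[of _ K]) auto
qed simp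

lemma dual_nhd_of_1_contains_annihilator:
  assumes "openin dual_topology V" "(\<lambda>_. 1) \<in> V"
  shows "\<exists>K. compact K \<and> (\<forall>c\<in>characters. (\<forall>x\<in>K. c x = 1) \<longrightarrow> c \<in> V)"
proof -
  obtain T where T: "generate_topology_on {{c. c ` K \<subseteq> U} | K U. compact K \<and> open U} T"
    "V = T \<inter> characters"
    using assms(1) unfolding dual_topology_def openin_subtopology openin_topology_generated_by_iff
    by blast
  have "(\<lambda>_. 1) \<in> T" using assms(2) T(2) by blast
  then obtain K where "compact K" "\<forall>d. (\<forall>x\<in>K. d x = 1) \<longrightarrow> d \<in> T"
    using compact_open_nhd_of_1_contains_annihilator[OF T(1)] by blast
  with T(2) show ?thesis by blast
qed

lemma subset_generated_submodule: "K \<subseteq> generated_submodule \<Sigma> smul K"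
  unfolding generated_submodule_def by blast

lemma generated_submodule_least:
  "is_submodule \<Sigma> smul N \<Longrightarrow> K \<subseteq> N \<Longrightarrow> generated_submodule \<Sigma> smul K \<subseteq> N"
  unfolding generated_submodule_def by blast

lemma is_submodule_generated_submodule: "is_submodule \<Sigma> smul (generated_submodule \<Sigma> smul K)"
  unfolding generated_submodule_def by (auto simp: is_submodule_def)

lemma is_submodule_common_kernel:
  assumes "is_dual_submodule \<Sigma> smul H"
  shows "is_submodule \<Sigma> smul {x. \<forall>c\<in>H. c x = 1}"
  unfolding is_submodule_def
proof (intro conjI ballI)
  have H: "H \<subseteq> characters" "\<And>r c. r \<in> ZS \<Sigma> \<Longrightarrow> c \<in> H \<Longrightarrow> (\<lambda>x. c (smul r x)) \<in> H"
    using assms unfolding is_dual_submodule_def by blast+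
  show "0 \<in> {x. \<forall>c\<in>H. c x = 1}" using H(1) character_zero by blast
  show "x + y \<in> {x. \<forall>c\<in>H. c x = 1}" if "x \<in> {x. \<forall>c\<in>H. c x = 1}" "y \<in> {x. \<forall>c\<in>H. c x = 1}" for x y
  proof (intro CollectI ballI)
    fix c assume "c \<in> H"
    then have "c (x + y) = c x * c y" using H(1) unfolding characters_def by blast
    moreover have "c x = 1" "c y = 1" using that \<open>c \<in> H\<close> by auto
    ultimately show "c (x + y) = 1" by simp
  qed
  show "smul r x \<in> {x. \<forall>c\<in>H. c x = 1}" if "r \<in> ZS \<Sigma>" "x \<in> {x. \<forall>c\<in>H. c x = 1}" for r x
    using that H(2) by fastforce
qed

locale top_ZS_module =
  fixes \<Sigma> :: "nat set" and smul :: "rat \<Rightarrow> 'm::topological_ab_group_add \<Rightarrow> 'm"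
  assumes top_module: "is_top_ZS_module \<Sigma> smul"
begin

lemma smul_add_right: "r \<in> ZS \<Sigma> \<Longrightarrow> smul r (x + y) = smul r x + smul r y"
  and smul_add_left: "r \<in> ZS \<Sigma> \<Longrightarrow> s \<in> ZS \<Sigma> \<Longrightarrow> smul (r + s) x = smul r x + smul s x"
  and smul_mult: "r \<in> ZS \<Sigma> \<Longrightarrow> s \<in> ZS \<Sigma> \<Longrightarrow> smul (r * s) x = smul r (smul s x)"
  and smul_one: "smul 1 x = x"
  and continuous_on_smul: "r \<in> ZS \<Sigma> \<Longrightarrow> continuous_on UNIV (smul r)"
  using top_module unfolding is_top_ZS_module_def is_ZS_module_def by blast+

sublocale int_module "\<lambda>n. smul (of_int n)"
  by unfold_locales (simp_all add: of_int_in_ZS smul_add_right smul_one flip: smul_add_left smul_mult)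

lemma is_dual_submodule_annihilator:
  assumes N: "is_submodule \<Sigma> smul N"
  shows "is_dual_submodule \<Sigma> smul {c \<in> characters. \<forall>a\<in>N. c a = 1}"
proof -
  let ?A = "{c \<in> characters. \<forall>a\<in>N. c a = 1}"
  have N_smul: "\<And>r a. r \<in> ZS \<Sigma> \<Longrightarrow> a \<in> N \<Longrightarrow> smul r a \<in> N"
    using N unfolding is_submodule_def by blast
  have "(\<lambda>x. c x * d x) \<in> ?A" if "c \<in> ?A" "d \<in> ?A" for c d
    using that characters_mult[of c d] by simp
  moreover have "(\<lambda>x. c (smul r x)) \<in> ?A" if r: "r \<in> ZS \<Sigma>" and c: "c \<in> ?A" for r c
  proof -
    have "c \<in> characters" using c by blast
    then have "(\<lambda>x. c (smul r x)) \<in> characters"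
      by (rule characters_comp_additive[OF _ continuous_on_smul[OF r] smul_add_right[OF r]])
    moreover have "\<forall>a\<in>N. c (smul r a) = 1" using c N_smul[OF r] by auto
    ultimately show ?thesis by blast
  qed
  moreover have "(\<lambda>_. 1) \<in> ?A" using characters_one by simp
  ultimately show ?thesis unfolding is_dual_submodule_def by blast
qed

lemma dual_submodule_in_half_plane_nhd_trivial_on:
  assumes H: "is_dual_submodule \<Sigma> smul H" and small: "H \<subseteq> {c. c ` K \<subseteq> {z. 0 < Re z}}"
    and c: "c \<in> H" and k: "k \<in> K"
  shows "c k = 1"
proof (rule unit_circle_eq_1_if_Re_powers_pos)
  have char: "c \<in> characters" using H c unfolding is_dual_submodule_def by blast
  then have norm: "cmod (c x) = 1" for x unfolding characters_def by blast
  then show "cmod (c k) = 1" .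
  fix n :: nat
  have "(\<lambda>x. c (smul (of_int (int n)) x)) \<in> H"
    using H c of_int_in_ZS unfolding is_dual_submodule_def by blast
  then have "0 < Re (c (smul (of_int (int n)) k))" using small k by blast
  moreover have "c (smul (of_int (int n)) k) = c k powi (int n)"
  proof (rule hom_imul_eq_powi[where D = UNIV])
    show "c (a + b) = c a * c b" for a b using char unfolding characters_def by blast
    show "c a \<noteq> 0" for a using norm[of a] by auto
  qed simp
  ultimately show "0 < Re (c k ^ n)" by simp
qed

lemma compactly_generated_imp_dual_no_small_submodules:
  assumes "compactly_generated \<Sigma> smul"
  shows "dual_no_small_submodules \<Sigma> smul"
proof -
  obtain K where K: "compact K" "generated_submodule \<Sigma> smul K = UNIV"
    using assms unfolding compactly_generated_def by blast
  let ?V = "{c. c ` K \<subseteq> {z. 0 < Re z}} \<inter> characters"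
  have "openin dual_topology ?V"
    using K(1) open_halfspace_Re_gt by (rule openin_dual_topology_compact_open)
  moreover have "(\<lambda>_. 1) \<in> ?V" using characters_one by auto
  moreover have "H = {\<lambda>_. 1}" if H: "is_dual_submodule \<Sigma> smul H" "H \<subseteq> ?V" for H
  proof -
    have "K \<subseteq> {x. \<forall>c\<in>H. c x = 1}"
      using dual_submodule_in_half_plane_nhd_trivial_on[OF H(1)] H(2) by blast
    then have "generated_submodule \<Sigma> smul K \<subseteq> {x. \<forall>c\<in>H. c x = 1}"
      by (rule generated_submodule_least[OF is_submodule_common_kernel[OF H(1)]])
    then have "c = (\<lambda>_. 1)" if "c \<in> H" for c
      using K(2) that by fastforce
    moreover have "(\<lambda>_. 1) \<in> H" using H(1) unfolding is_dual_submodule_def by blast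
    ultimately show ?thesis by blast
  qed
  ultimately show ?thesis unfolding dual_no_small_submodules_def by blast
qed

lemma dual_no_small_submodules_imp_compactly_generated:
  assumes "locally_compact_space (euclidean :: 'm topology)" and "dual_no_small_submodules \<Sigma> smul"
  shows "compactly_generated \<Sigma> smul"
proof -
  obtain V where V: "openin dual_topology V" "(\<lambda>_. 1) \<in> V"
    and no_small: "\<And>H. is_dual_submodule \<Sigma> smul H \<Longrightarrow> H \<subseteq> V \<Longrightarrow> H = {\<lambda>_. 1}"
    using assms(2) unfolding dual_no_small_submodules_def by blast
  obtain K where K: "compact K" "\<And>c. c \<in> characters \<Longrightarrow> \<forall>x\<in>K. c x = 1 \<Longrightarrow> c \<in> V"
    using dual_nhd_of_1_contains_annihilator[OF V] by blast
  have "\<exists>U. open U \<and> (\<exists>C. compact C \<and> (0::'m) \<in> U \<and> U \<subseteq> C)"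
    using assms(1) unfolding locally_compact_space_def by simp
  then obtain U C where UC: "open U" "compact C" "(0::'m) \<in> U" "U \<subseteq> C" by blast
  define N where "N = generated_submodule \<Sigma> smul (K \<union> C)"
  have N: "is_submodule \<Sigma> smul N" and KC: "K \<union> C \<subseteq> N"
    unfolding N_def by (rule is_submodule_generated_submodule, rule subset_generated_submodule)
  have "x \<in> N" for x
  proof (rule ccontr)
    assume "x \<notin> N"
    moreover have "0 \<in> N" "\<And>a b. a \<in> N \<Longrightarrow> b \<in> N \<Longrightarrow> a + b \<in> N"
      "\<And>a n. a \<in> N \<Longrightarrow> smul (of_int n) a \<in> N"
      using N of_int_in_ZS unfolding is_submodule_def by blast+
    ultimately obtain \<psi> where \<psi>: "\<forall>x y. \<psi> (x + y) = \<psi> x * \<psi> y" "\<forall>x. cmod (\<psi> x) = 1"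
      "\<forall>a\<in>N. \<psi> a = 1" "\<psi> x \<noteq> 1"
      using character_separates_subgroup by metis
    \<comment> \<open>\<open>N\<close> is a neighbourhood of \<open>0\<close>, so \<open>\<psi>\<close> is locally constant\<close>
    have "continuous_on UNIV \<psi>"
      using \<psi>(1,3) UC KC by (intro continuous_on_if_trivial_near_zero[OF _ UC(1,3)]) auto
    with \<psi>(1,2) have "\<psi> \<in> {c \<in> characters. \<forall>a\<in>N. c a = 1}"
      using \<psi>(3) unfolding characters_def by blast
    moreover have "{c \<in> characters. \<forall>a\<in>N. c a = 1} = {\<lambda>_. 1}"
      using KC K(2) by (intro no_small is_dual_submodule_annihilator[OF N]) auto
    ultimately show False using \<psi>(4) by auto
  qed
  then show ?thesis
    unfolding compactly_generated_def N_def using K(1) UC(2) by blast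
qed

end

theorem mainTheorem4:
  fixes \<Sigma> :: "nat set" and smul :: "rat \<Rightarrow> 'm::{topological_ab_group_add, t2_space} \<Rightarrow> 'm"
  assumes "\<forall>p\<in>\<Sigma>. prime p"
    and "locally_compact_space (euclidean :: 'm topology)"
    and "is_top_ZS_module \<Sigma> smul"
  shows "compactly_generated \<Sigma> smul \<longleftrightarrow> dual_no_small_submodules \<Sigma> smul"
proof -
  interpret top_ZS_module \<Sigma> smul by (rule top_ZS_module.intro) (fact assms(3))
  show ?thesis
    using compactly_generated_imp_dual_no_small_submodules
      dual_no_small_submodules_imp_compactly_generated[OF assms(2)] by blast
qed

end
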